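(* Let $p\ge 2$, let $E_1,\dots,E_p$ be Banach spaces, $I$ a finite set, and for $k=1,\dots,p$ let $(d_i(k))_{i\in I}$ be elements of $E_k$ with $f_k=\sum_{i\in I}d_i(k)$. Let $(\varepsilon_i)_{i\in I}$ be independent random variables with $P(\varepsilon_i=1)=P(\varepsilon_i=-1)=1/2$ and put $S_k=\big(\mathbb E\|\sum_{i\in I}\varepsilon_id_i(k)\|^p\big)^{1/p}$. Then, in $E_1\widehat\otimes\cdots\widehat\otimes E_p$, $$\Big\|f_1\otimes\cdots\otimes f_p-\sum_{g\colon\{1,\dots,p\}\to I\ \text{injective}}d_{g(1)}(1)\otimes\cdots\otimes d_{g(p)}(p)\Big\|_\wedge\le\sum_{A\subset\{1,\dots,p\},\ |A|\le p-2}\ \prod_{k\in A}\|f_k\|\cdot\prod_{k\notin A}S_k\cdot(p-|A|)!\,.$$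
   Context: $E_1\widehat\otimes\cdots\widehat\otimes E_p$ denotes the projective tensor product of Banach spaces, with projective norm $\|\cdot\|_\wedge$. *)

theory Defs
  imports "HOL-Analysis.Analysis" "HOL-Probability.Probability"
begin

text \<open>The Banach spaces E_1,...,E_p are modelled as closed linear subspaces E k of one
  common real Banach space 'a (every family of Banach spaces embeds isometrically into
  such a common space, e.g. its l-infinity sum).  A p-tuple is a function nat => 'a,
  of which only the coordinates 1..p matter.\<close>

definition multilinear_on :: "nat \<Rightarrow> (nat \<Rightarrow> 'a::real_vector set) \<Rightarrow> ((nat \<Rightarrow> 'a) \<Rightarrow> real) \<Rightarrow> bool" where
  "multilinear_on p E \<phi> \<longleftrightarrow>
     (\<forall>x y. (\<forall>k\<in>{1..p}. x k = y k) \<longrightarrow> \<phi> x = \<phi> y) \<and>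
     (\<forall>x. (\<forall>j\<in>{1..p}. x j \<in> E j) \<longrightarrow>
        (\<forall>k\<in>{1..p}. \<forall>a\<in>E k. \<forall>b\<in>E k. \<forall>c::real.
           \<phi> (x(k := a + b)) = \<phi> (x(k := a)) + \<phi> (x(k := b)) \<and>
           \<phi> (x(k := c *\<^sub>R a)) = c * \<phi> (x(k := a))))"

text \<open>An element of the algebraic tensor product E_1 (x) ... (x) E_p is identified with the
  linear functional it induces on the space of (algebraic) multilinear forms;
  a list ys of p-tuples represents the tensor sum of the elementary tensors
  y 1 (x) ... (x) y p, y in ys.\<close>

definition represents :: "nat \<Rightarrow> (nat \<Rightarrow> 'a::real_vector set) \<Rightarrow> (((nat \<Rightarrow> 'a) \<Rightarrow> real) \<Rightarrow> real)
    \<Rightarrow> (nat \<Rightarrow> 'a) list \<Rightarrow> bool" where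
  "represents p E T ys \<longleftrightarrow>
     (\<forall>y\<in>set ys. \<forall>k\<in>{1..p}. y k \<in> E k) \<and>
     (\<forall>\<phi>. multilinear_on p E \<phi> \<longrightarrow> T \<phi> = (\<Sum>y\<leftarrow>ys. \<phi> y))"

text \<open>Projective norm of an element of the algebraic tensor product (which embeds isometrically
  into the completed projective tensor product).\<close>

definition proj_norm :: "nat \<Rightarrow> (nat \<Rightarrow> 'a::real_normed_vector set) \<Rightarrow> (((nat \<Rightarrow> 'a) \<Rightarrow> real) \<Rightarrow> real) \<Rightarrow> real" where
  "proj_norm p E T = Inf {(\<Sum>y\<leftarrow>ys. \<Prod>k\<in>{1..p}. norm (y k)) | ys. represents p E T ys}"

definition rademacher :: "'i set \<Rightarrow> ('i \<Rightarrow> real) pmf" where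
  "rademacher I = Pi_pmf I 0 (\<lambda>_. pmf_of_set {-1, 1})"

end

(*
  Decoupling with random signs. For independent sign vectors eps_1, ..., eps_p indexed by I and a
  permutation sigma of {1..p}, let X_sigma(k) = sum_i eps_k(i) eps_(sigma k)(i) d_i(k). Expanding
  multilinearly, the average of X_sigma(1) (x) ... (x) X_sigma(p) is the sum of the elementary
  tensors d_(g 1)(1) (x) ... (x) d_(g p)(p) over the g with g o sigma = g, and the signed count
  sum_sigma sign sigma [g o sigma = g] is 1 for injective g and 0 otherwise. Since X_id(k) = f_k,
  the tensor in question equals - sum_(sigma /= id) sign sigma * avg (X_sigma(1) (x) ... (x) X_sigma(p)),
  so its projective norm is at most sum_(sigma /= id) avg prod_k |X_sigma(k)|. By Hoelder's
  inequality the average is at most prod_k (avg |X_sigma(k)|^p)^(1/p), where a fixed point k of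
  sigma contributes |f_k| and a moved point contributes S_k, because eps_k eps_(sigma k) is again a
  uniformly distributed sign vector. Finally, a permutation other than the identity fixes at most
  p - 2 points, and at most (p - |A|)! permutations have fixed-point set A.
*)

theory Submission
  imports Defs
begin

section \<open>Multilinear forms and the projective norm\<close>

lemma multilinear_on_cong:
  assumes "multilinear_on p E \<phi>" and "\<And>k. k \<in> {1..p} \<Longrightarrow> x k = y k"
  shows "\<phi> x = \<phi> y"
  using assms unfolding multilinear_on_def by blast

lemma multilinear_on_add:
  assumes "multilinear_on p E \<phi>" and "\<forall>j\<in>{1..p}. x j \<in> E j" and "k \<in> {1..p}"
    and "a \<in> E k" and "b \<in> E k"
  shows "\<phi> (x(k := a + b)) = \<phi> (x(k := a)) + \<phi> (x(k := b))"
  using assms unfolding multilinear_on_def by blast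

lemma multilinear_on_scaleR:
  assumes "multilinear_on p E \<phi>" and "\<forall>j\<in>{1..p}. x j \<in> E j" and "k \<in> {1..p}"
    and "a \<in> E k"
  shows "\<phi> (x(k := c *\<^sub>R a)) = c * \<phi> (x(k := a))"
  using assms unfolding multilinear_on_def by blast

lemma multilinear_on_sum:
  assumes ml: "multilinear_on p E \<phi>" and x: "\<forall>j\<in>{1..p}. x j \<in> E j" and k: "k \<in> {1..p}"
    and sub: "subspace (E k)" and J: "finite J" and v: "\<And>i. i \<in> J \<Longrightarrow> v i \<in> E k"
  shows "\<phi> (x(k := \<Sum>i\<in>J. c i *\<^sub>R v i)) = (\<Sum>i\<in>J. c i * \<phi> (x(k := v i)))"
  using J v
proof (induction J rule: finite_induct)
  case empty
  have "\<phi> (x(k := 0 *\<^sub>R x k)) = 0 * \<phi> (x(k := x k))"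
    using multilinear_on_scaleR[OF ml x k] x k by blast
  then show ?case by (simp only: sum.empty scale_zero_left mult_zero_left)
next
  case (insert a J)
  have va: "v a \<in> E k" and sJ: "(\<Sum>i\<in>J. c i *\<^sub>R v i) \<in> E k" and ca: "c a *\<^sub>R v a \<in> E k"
    using insert sub by (auto intro!: subspace_sum subspace_scale)
  have "\<phi> (x(k := \<Sum>i\<in>insert a J. c i *\<^sub>R v i))
      = \<phi> (x(k := c a *\<^sub>R v a + (\<Sum>i\<in>J. c i *\<^sub>R v i)))"
    by (simp only: sum.insert[OF insert(1,2)])
  also have "\<dots> = c a * \<phi> (x(k := v a)) + \<phi> (x(k := \<Sum>i\<in>J. c i *\<^sub>R v i))"
    by (simp only: multilinear_on_add[OF ml x k ca sJ] multilinear_on_scaleR[OF ml x k va])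
  also have "\<phi> (x(k := \<Sum>i\<in>J. c i *\<^sub>R v i)) = (\<Sum>i\<in>J. c i * \<phi> (x(k := v i)))"
    using insert.IH insert.prems by blast
  also have "c a * \<phi> (x(k := v a)) + (\<Sum>i\<in>J. c i * \<phi> (x(k := v i)))
      = (\<Sum>i\<in>insert a J. c i * \<phi> (x(k := v i)))"
    by (simp only: sum.insert[OF insert(1,2)])
  finally show ?case .
qed

lemma multilinear_on_expand_slots:
  assumes ml: "multilinear_on p E \<phi>" and x: "\<forall>j\<in>{1..p}. x j \<in> E j"
    and sub: "\<And>k. k \<in> {1..p} \<Longrightarrow> subspace (E k)" and I: "finite I"
    and d: "\<And>i k. i \<in> I \<Longrightarrow> k \<in> {1..p} \<Longrightarrow> d i k \<in> E k"
    and K: "K \<subseteq> {1..p}"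
  shows "\<phi> (\<lambda>k. if k \<in> K then (\<Sum>i\<in>I. c k i *\<^sub>R d i k) else x k)
     = (\<Sum>g\<in>K \<rightarrow>\<^sub>E I. (\<Prod>k\<in>K. c k (g k)) * \<phi> (\<lambda>k. if k \<in> K then d (g k) k else x k))"
  using finite_subset[OF K finite_atLeastAtMost] K x
proof (induction K arbitrary: x rule: finite_induct)
  case empty
  then show ?case by simp
next
  case (insert a K)
  have a: "a \<in> {1..p}" using insert by auto
  define y where "y = (\<lambda>k. if k \<in> K then (\<Sum>i\<in>I. c k i *\<^sub>R d i k) else x k)"
  have y: "\<forall>j\<in>{1..p}. y j \<in> E j"
    using insert(4,5) sub d unfolding y_def by (auto intro!: subspace_sum subspace_scale)
  have x_upd: "\<forall>j\<in>{1..p}. (x(a := d i a)) j \<in> E j" if "i \<in> I" for i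
    using insert(5) d[OF that a] by auto
  have "\<phi> (\<lambda>k. if k \<in> insert a K then (\<Sum>i\<in>I. c k i *\<^sub>R d i k) else x k)
      = \<phi> (y(a := \<Sum>i\<in>I. c a i *\<^sub>R d i a))"
    unfolding y_def by (rule arg_cong[where f = \<phi>]) auto
  also have "\<dots> = (\<Sum>i\<in>I. c a i * \<phi> (y(a := d i a)))"
    using multilinear_on_sum[OF ml y a sub[OF a] I] d a by simp
  also have "\<dots> = (\<Sum>i\<in>I. c a i * (\<Sum>g\<in>K \<rightarrow>\<^sub>E I. (\<Prod>k\<in>K. c k (g k)) *
          \<phi> (\<lambda>k. if k \<in> K then d (g k) k else (x(a := d i a)) k)))"
  proof (intro sum.cong refl arg_cong2[where f = "(*)"])
    fix i assume i: "i \<in> I"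
    have "y(a := d i a) = (\<lambda>k. if k \<in> K then (\<Sum>i\<in>I. c k i *\<^sub>R d i k) else (x(a := d i a)) k)"
      unfolding y_def using insert(2) by auto
    then show "\<phi> (y(a := d i a)) = (\<Sum>g\<in>K \<rightarrow>\<^sub>E I. (\<Prod>k\<in>K. c k (g k)) *
          \<phi> (\<lambda>k. if k \<in> K then d (g k) k else (x(a := d i a)) k))"
      using insert.IH[OF _ x_upd[OF i]] insert(4) by simp
  qed
  also have "\<dots> = (\<Sum>(i, g)\<in>I \<times> (K \<rightarrow>\<^sub>E I). c a i * ((\<Prod>k\<in>K. c k (g k)) *
          \<phi> (\<lambda>k. if k \<in> K then d (g k) k else (x(a := d i a)) k)))"
    by (simp add: sum.cartesian_product sum_distrib_left)
  also have "\<dots> = (\<Sum>g\<in>insert a K \<rightarrow>\<^sub>E I. (\<Prod>k\<in>insert a K. c k (g k)) *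
          \<phi> (\<lambda>k. if k \<in> insert a K then d (g k) k else x k))"
  proof (rule sum.reindex_bij_witness[of _ "\<lambda>g. (g a, g(a := undefined))" "\<lambda>(i, g). g(a := i)"])
    fix ig assume "ig \<in> I \<times> (K \<rightarrow>\<^sub>E I)"
    then obtain i g where ig: "ig = (i, g)" "i \<in> I" "g \<in> K \<rightarrow>\<^sub>E I" by auto
    have "(\<Prod>k\<in>insert a K. c k ((g(a := i)) k)) = c a i * (\<Prod>k\<in>K. c k (g k))"
      using insert(1,2) by (auto intro!: prod.cong)
    moreover have "(\<lambda>k. if k \<in> insert a K then d ((g(a := i)) k) k else x k)
        = (\<lambda>k. if k \<in> K then d (g k) k else (x(a := d i a)) k)"
      using insert(2) by auto
    ultimately show "(\<Prod>k\<in>insert a K. c k ((case ig of (i, g) \<Rightarrow> g(a := i)) k)) *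
          \<phi> (\<lambda>k. if k \<in> insert a K then d ((case ig of (i, g) \<Rightarrow> g(a := i)) k) k else x k)
        = (case ig of (i, g) \<Rightarrow> c a i * ((\<Prod>k\<in>K. c k (g k)) *
          \<phi> (\<lambda>k. if k \<in> K then d (g k) k else (x(a := d i a)) k)))"
      by (simp only: ig(1) prod.case mult.assoc)
  qed (use insert(2) in \<open>auto simp: PiE_def extensional_def fun_eq_iff\<close>)
  finally show ?case .
qed

lemma multilinear_on_expand:
  assumes ml: "multilinear_on p E \<phi>"
    and sub: "\<And>k. k \<in> {1..p} \<Longrightarrow> subspace (E k)" and I: "finite I"
    and d: "\<And>i k. i \<in> I \<Longrightarrow> k \<in> {1..p} \<Longrightarrow> d i k \<in> E k"
  shows "\<phi> (\<lambda>k. \<Sum>i\<in>I. c k i *\<^sub>R d i k)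
     = (\<Sum>g\<in>{1..p} \<rightarrow>\<^sub>E I. (\<Prod>k\<in>{1..p}. c k (g k)) * \<phi> (\<lambda>k. d (g k) k))"
proof -
  have zero: "\<forall>j\<in>{1..p}. 0 \<in> E j" using sub subspace_0 by blast
  have "\<phi> (\<lambda>k. \<Sum>i\<in>I. c k i *\<^sub>R d i k)
      = \<phi> (\<lambda>k. if k \<in> {1..p} then (\<Sum>i\<in>I. c k i *\<^sub>R d i k) else 0)"
    by (rule multilinear_on_cong[OF ml]) simp
  also have "\<dots> = (\<Sum>g\<in>{1..p} \<rightarrow>\<^sub>E I. (\<Prod>k\<in>{1..p}. c k (g k)) *
       \<phi> (\<lambda>k. if k \<in> {1..p} then d (g k) k else 0))"
    by (rule multilinear_on_expand_slots[OF ml zero sub I d order_refl])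
  also have "\<dots> = (\<Sum>g\<in>{1..p} \<rightarrow>\<^sub>E I. (\<Prod>k\<in>{1..p}. c k (g k)) * \<phi> (\<lambda>k. d (g k) k))"
    by (intro sum.cong refl arg_cong2[where f = "(*)"] multilinear_on_cong[OF ml]) simp
  finally show ?thesis .
qed

lemma proj_norm_le_sum:
  assumes A: "finite A" and y: "\<And>a k. a \<in> A \<Longrightarrow> k \<in> {1..p} \<Longrightarrow> y a k \<in> E k"
    and T: "\<And>\<phi>. multilinear_on p E \<phi> \<Longrightarrow> T \<phi> = (\<Sum>a\<in>A. \<phi> (y a))"
  shows "proj_norm p E T \<le> (\<Sum>a\<in>A. \<Prod>k\<in>{1..p}. norm (y a k))"
proof -
  obtain xs where xs: "set xs = A" "distinct xs" using finite_distinct_list[OF A] by blast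
  have "represents p E T (map y xs)"
    unfolding represents_def using xs y T by (auto simp: sum_list_distinct_conv_sum_set)
  then have "proj_norm p E T \<le> (\<Sum>z\<leftarrow>map y xs. \<Prod>k\<in>{1..p}. norm (z k))"
    unfolding proj_norm_def
    by (intro cInf_lower bdd_belowI[of _ 0] CollectI exI[of _ "map y xs"])
       (auto intro!: sum_list_nonneg prod_nonneg)
  then show ?thesis
    using xs by (simp add: sum_list_distinct_conv_sum_set o_def)
qed

lemma proj_norm_le_lincomb:
  assumes p: "1 \<le> p" and sub: "subspace (E 1)" and A: "finite A"
    and y: "\<And>a k. a \<in> A \<Longrightarrow> k \<in> {1..p} \<Longrightarrow> y a k \<in> E k"
    and T: "\<And>\<phi>. multilinear_on p E \<phi> \<Longrightarrow> T \<phi> = (\<Sum>a\<in>A. c a * \<phi> (y a))"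
  shows "proj_norm p E T \<le> (\<Sum>a\<in>A. \<bar>c a\<bar> * (\<Prod>k\<in>{1..p}. norm (y a k)))"
proof -
  define y' where "y' a = (y a)(1 := c a *\<^sub>R y a 1)" for a
  have one: "1 \<in> {1..p}" using p by simp
  have y': "y' a k \<in> E k" if "a \<in> A" "k \<in> {1..p}" for a k
    using y[OF that] y[OF that(1) one] sub unfolding y'_def by (auto simp: subspace_scale)
  have "proj_norm p E T \<le> (\<Sum>a\<in>A. \<Prod>k\<in>{1..p}. norm (y' a k))"
  proof (rule proj_norm_le_sum[OF A y'])
    fix \<phi> assume ml: "multilinear_on p E \<phi>"
    have "\<phi> (y' a) = c a * \<phi> ((y a)(1 := y a 1))" if "a \<in> A" for a
      unfolding y'_def using y[OF that] y[OF that one] by (intro multilinear_on_scaleR[OF ml _ one]) auto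
    then have "\<phi> (y' a) = c a * \<phi> (y a)" if "a \<in> A" for a
      using that by simp
    then show "T \<phi> = (\<Sum>a\<in>A. \<phi> (y' a))" using T[OF ml] by simp
  qed
  also have "\<dots> = (\<Sum>a\<in>A. \<bar>c a\<bar> * (\<Prod>k\<in>{1..p}. norm (y a k)))"
  proof (intro sum.cong refl)
    fix a
    have "(\<Prod>k\<in>{1..p}. norm (y' a k)) = (\<Prod>k\<in>{1..p}. (if k = 1 then \<bar>c a\<bar> else 1) * norm (y a k))"
      unfolding y'_def by (intro prod.cong) auto
    then show "(\<Prod>k\<in>{1..p}. norm (y' a k)) = \<bar>c a\<bar> * (\<Prod>k\<in>{1..p}. norm (y a k))"
      using one by (simp add: prod.distrib)
  qed
  finally show ?thesis .
qed


section \<open>Permutations\<close>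

lemma permutes_stabilizer_inj:
  assumes "inj_on g P" and "\<sigma> permutes P" and "g \<circ> \<sigma> = g"
  shows "\<sigma> = id"
proof
  fix x
  show "\<sigma> x = id x"
  proof (cases "x \<in> P")
    case True
    then have "\<sigma> x \<in> P" using assms(2) permutes_in_image by fastforce
    moreover have "g (\<sigma> x) = g x" using assms(3) by (metis comp_apply)
    ultimately show ?thesis using assms(1) True by (auto dest: inj_onD)
  next
    case False
    then show ?thesis using assms(2) permutes_not_in by fastforce
  qed
qed

text \<open>If g identifies two points of P, composing with their transposition is a
  sign-reversing involution of the stabilizer of g.\<close>

lemma sum_sign_stabilizer:
  fixes g :: "'k \<Rightarrow> 'i"
  assumes P: "finite P"
  shows "(\<Sum>\<sigma>\<in>{\<sigma>. \<sigma> permutes P}. if g \<circ> \<sigma> = g then real_of_int (sign \<sigma>) else 0)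
       = (if inj_on g P then 1 else 0)"
proof (cases "inj_on g P")
  case True
  have "(\<Sum>\<sigma>\<in>{\<sigma>. \<sigma> permutes P}. if g \<circ> \<sigma> = g then real_of_int (sign \<sigma>) else 0)
      = (\<Sum>\<sigma>\<in>{\<sigma>. \<sigma> permutes P}. if \<sigma> = id then 1 else 0)"
    using permutes_stabilizer_inj[OF True] by (intro sum.cong) auto
  also have "\<dots> = 1" using P by (simp add: sum.delta' finite_permutations permutes_id)
  finally show ?thesis using True by simp
next
  case False
  then obtain a b where ab: "a \<in> P" "b \<in> P" "a \<noteq> b" "g a = g b"
    unfolding inj_on_def by blast
  define \<tau> where "\<tau> = Transposition.transpose a b"
  have \<tau>: "\<tau> permutes P" "g \<circ> \<tau> = g" "\<tau> \<circ> \<tau> = id"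
    unfolding \<tau>_def using ab
    by (auto simp: permutes_swap_id fun_eq_iff Transposition.transpose_def)
  let ?F = "\<lambda>\<sigma>. if g \<circ> \<sigma> = g then real_of_int (sign \<sigma>) else 0"
  have "?F (\<sigma> \<circ> \<tau>) = - ?F \<sigma>" if \<sigma>: "\<sigma> permutes P" for \<sigma>
  proof -
    have "g \<circ> (\<sigma> \<circ> \<tau>) = g \<longleftrightarrow> g \<circ> \<sigma> = g"
      by (metis \<tau>(2,3) comp_assoc comp_id)
    moreover have "sign (\<sigma> \<circ> \<tau>) = - sign \<sigma>"
      using sign_compose[OF permutes_imp_permutation[OF P \<sigma>] permutes_imp_permutation[OF P \<tau>(1)]]
        sign_swap_id[of a b] ab unfolding \<tau>_def by simp
    ultimately show ?thesis by auto
  qed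
  then have "(\<Sum>\<sigma>\<in>{\<sigma>. \<sigma> permutes P}. ?F \<sigma>) = (\<Sum>\<sigma>\<in>{\<sigma>. \<sigma> permutes P}. - ?F \<sigma>)"
    by (intro sum.reindex_bij_witness[of _ "\<lambda>\<sigma>. \<sigma> \<circ> \<tau>" "\<lambda>\<sigma>. \<sigma> \<circ> \<tau>"])
       (use \<tau> permutes_compose in \<open>auto simp: comp_assoc\<close>)
  then show ?thesis using False by (simp add: sum_negf)
qed

lemma card_fixpoints_permutes_le:
  assumes \<sigma>: "\<sigma> permutes P" and P: "finite P" and "\<sigma> \<noteq> id"
  shows "card {k\<in>P. \<sigma> k = k} \<le> card P - 2"
proof -
  obtain a where a: "\<sigma> a \<noteq> a" using assms(3) by (auto simp: fun_eq_iff)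
  have "\<sigma> (\<sigma> a) \<noteq> \<sigma> a"
    using a permutes_inj[OF \<sigma>] by (auto dest: injD)
  moreover have "a \<in> P" using a permutes_not_in[OF \<sigma>] by metis
  moreover then have "\<sigma> a \<in> P" by (simp add: permutes_in_image[OF \<sigma>])
  ultimately have "{a, \<sigma> a} \<subseteq> P - {k\<in>P. \<sigma> k = k}" using a by auto
  then have "card {a, \<sigma> a} \<le> card (P - {k\<in>P. \<sigma> k = k})"
    using P by (intro card_mono) auto
  then have "2 \<le> card (P - {k\<in>P. \<sigma> k = k})" using a by simp
  moreover have "card (P - {k\<in>P. \<sigma> k = k}) = card P - card {k\<in>P. \<sigma> k = k}"
    using P by (intro card_Diff_subset) auto
  ultimately show ?thesis by simp
qed

lemma card_permutes_with_fixpoints_le: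
  assumes P: "finite P" and A: "A \<subseteq> P"
  shows "card {\<sigma>. \<sigma> permutes P \<and> {k\<in>P. \<sigma> k = k} = A} \<le> fact (card P - card A)"
proof -
  have "{\<sigma>. \<sigma> permutes P \<and> {k\<in>P. \<sigma> k = k} = A} \<subseteq> {\<sigma>. \<sigma> permutes (P - A)}"
    by (auto intro: permutes_superset)
  then have "card {\<sigma>. \<sigma> permutes P \<and> {k\<in>P. \<sigma> k = k} = A} \<le> card {\<sigma>. \<sigma> permutes (P - A)}"
    using P by (intro card_mono finite_permutations) auto
  also have "\<dots> = fact (card P - card A)"
    using P A by (subst card_permutations[of "P - A"]) (auto simp: card_Diff_subset finite_subset)
  finally show ?thesis .
qed

lemma sum_nonid_permutes_fixpoints_le:
  fixes B :: "'k set \<Rightarrow> real"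
  assumes P: "finite P" and B: "\<And>A. A \<subseteq> P \<Longrightarrow> B A \<ge> 0"
  shows "(\<Sum>\<sigma>\<in>{\<sigma>. \<sigma> permutes P} - {id}. B {k\<in>P. \<sigma> k = k})
       \<le> (\<Sum>A\<in>{A. A \<subseteq> P \<and> card A \<le> card P - 2}. B A * fact (card P - card A))"
proof -
  let ?Q = "{\<sigma>. \<sigma> permutes P} - {id}"
  let ?\<A> = "{A. A \<subseteq> P \<and> card A \<le> card P - 2}"
  have fin: "finite ?\<A>" by (rule finite_subset[of _ "Pow P"]) (auto simp: P)
  have img: "(\<lambda>\<sigma>. {k\<in>P. \<sigma> k = k}) ` ?Q \<subseteq> ?\<A>"
    using card_fixpoints_permutes_le[OF _ P] by auto
  have "(\<Sum>\<sigma>\<in>?Q. B {k\<in>P. \<sigma> k = k})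
      = (\<Sum>A\<in>?\<A>. \<Sum>\<sigma>\<in>{\<sigma>\<in>?Q. {k\<in>P. \<sigma> k = k} = A}. B {k\<in>P. \<sigma> k = k})"
    by (rule sum.group[symmetric, OF _ fin img]) (simp add: finite_permutations P)
  also have "\<dots> \<le> (\<Sum>A\<in>?\<A>. B A * fact (card P - card A))"
  proof (rule sum_mono)
    fix A assume A: "A \<in> ?\<A>"
    let ?Q\<^sub>A = "{\<sigma>\<in>?Q. {k\<in>P. \<sigma> k = k} = A}"
    have "?Q\<^sub>A \<subseteq> {\<sigma>. \<sigma> permutes P \<and> {k\<in>P. \<sigma> k = k} = A}" by blast
    then have "card ?Q\<^sub>A \<le> card {\<sigma>. \<sigma> permutes P \<and> {k\<in>P. \<sigma> k = k} = A}"
      by (rule card_mono[rotated]) (simp add: finite_permutations P)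
    also have "\<dots> \<le> fact (card P - card A)"
      using A P by (intro card_permutes_with_fixpoints_le) auto
    finally have "real (card ?Q\<^sub>A) \<le> real (fact (card P - card A))"
      by (rule of_nat_mono)
    then have card_le: "real (card ?Q\<^sub>A) \<le> fact (card P - card A)"
      by (simp only: of_nat_fact)
    have "(\<Sum>\<sigma>\<in>?Q\<^sub>A. B {k\<in>P. \<sigma> k = k}) = (\<Sum>\<sigma>\<in>?Q\<^sub>A. B A)"
      by (rule sum.cong) auto
    also have "\<dots> = real (card ?Q\<^sub>A) * B A"
      by (rule sum_constant)
    also have "\<dots> \<le> fact (card P - card A) * B A"
      using A by (intro mult_right_mono card_le B) auto
    finally show "(\<Sum>\<sigma>\<in>?Q\<^sub>A. B {k\<in>P. \<sigma> k = k}) \<le> B A * fact (card P - card A)"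
      by (simp only: mult.commute)
  qed
  finally show ?thesis .
qed


section \<open>Sign vectors\<close>

definition sign_vectors :: "'i set \<Rightarrow> ('i \<Rightarrow> real) set" where
  "sign_vectors I = PiE_dflt I 0 (\<lambda>_. {-1, 1})"

lemma sign_vectors_iff:
  "\<delta> \<in> sign_vectors I \<longleftrightarrow> (\<forall>i. (i \<in> I \<longrightarrow> \<delta> i \<in> {-1, 1}) \<and> (i \<notin> I \<longrightarrow> \<delta> i = 0))"
  unfolding sign_vectors_def PiE_dflt_def by auto

lemma finite_sign_vectors: "finite I \<Longrightarrow> finite (sign_vectors I)"
  unfolding sign_vectors_def by (rule finite_PiE_dflt) auto

lemma card_sign_vectors: "finite I \<Longrightarrow> card (sign_vectors I) = 2 ^ card I"
  unfolding sign_vectors_def by (subst card_PiE_dflt) (auto simp: numeral_2_eq_2)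

lemma sign_vectors_mult_self: "\<delta> \<in> sign_vectors I \<Longrightarrow> i \<in> I \<Longrightarrow> \<delta> i * \<delta> i = 1"
  unfolding sign_vectors_iff by auto

lemma sign_vectors_mult:
  "\<delta> \<in> sign_vectors I \<Longrightarrow> \<delta>' \<in> sign_vectors I \<Longrightarrow> (\<lambda>i. \<delta> i * \<delta>' i) \<in> sign_vectors I"
  unfolding sign_vectors_iff by force

lemma sum_sign_vectors_mult:
  assumes "a \<in> I" and "b \<in> I"
  shows "(\<Sum>\<delta>\<in>sign_vectors I. \<delta> a * \<delta> b) = (if a = b then real (card (sign_vectors I)) else 0)"
proof (cases "a = b")
  case True
  then show ?thesis using sign_vectors_mult_self[OF _ assms(1)] by simp
next
  case False
  have "(\<Sum>\<delta>\<in>sign_vectors I. \<delta> a * \<delta> b)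
      = (\<Sum>\<delta>\<in>sign_vectors I. (\<delta>(a := - \<delta> a)) a * (\<delta>(a := - \<delta> a)) b)"
    by (rule sum.reindex_bij_witness[of _ "\<lambda>\<delta>. \<delta>(a := - \<delta> a)" "\<lambda>\<delta>. \<delta>(a := - \<delta> a)"])
       (use assms in \<open>auto simp: sign_vectors_iff\<close>)
  also have "\<dots> = - (\<Sum>\<delta>\<in>sign_vectors I. \<delta> a * \<delta> b)"
    using False by (simp add: sum_negf)
  finally show ?thesis using False by simp
qed

lemma expectation_rademacher:
  assumes I: "finite I"
  shows "measure_pmf.expectation (rademacher I) F
       = (\<Sum>\<delta>\<in>sign_vectors I. F \<delta>) / real (card (sign_vectors I))"
proof -
  have set: "set_pmf (rademacher I) = sign_vectors I"
    unfolding rademacher_def sign_vectors_def using I by (simp add: set_Pi_pmf o_def)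
  have pmf: "pmf (rademacher I) \<delta> = 1 / real (card (sign_vectors I))" if "\<delta> \<in> sign_vectors I" for \<delta>
  proof -
    have "pmf (rademacher I) \<delta> = (\<Prod>i\<in>I. pmf (pmf_of_set {-1, 1::real}) (\<delta> i))"
      unfolding rademacher_def using I that by (subst pmf_Pi) (auto simp: sign_vectors_iff)
    also have "\<dots> = (\<Prod>i\<in>I. 1 / 2)"
      using that by (intro prod.cong refl) (auto simp: sign_vectors_iff)
    finally show ?thesis using card_sign_vectors[OF I] by (simp add: power_one_over)
  qed
  have "measure_pmf.expectation (rademacher I) F = (\<Sum>\<delta>\<in>sign_vectors I. F \<delta> * pmf (rademacher I) \<delta>)"
    by (rule integral_measure_pmf_real) (auto simp: set finite_sign_vectors I)
  then show ?thesis by (simp add: pmf sum_divide_distrib)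
qed

lemma sum_PiE_coordinate:
  fixes G :: "'b \<Rightarrow> real"
  assumes K: "finite K" "k \<in> K" and V: "finite V"
  shows "(\<Sum>\<epsilon>\<in>K \<rightarrow>\<^sub>E V. G (\<epsilon> k)) = real (card V) ^ (card K - 1) * (\<Sum>\<delta>\<in>V. G \<delta>)"
proof -
  let ?h = "\<lambda>j \<delta>. if j = k then G \<delta> else 1"
  have "(\<Sum>\<epsilon>\<in>K \<rightarrow>\<^sub>E V. G (\<epsilon> k)) = (\<Sum>\<epsilon>\<in>K \<rightarrow>\<^sub>E V. \<Prod>j\<in>K. ?h j (\<epsilon> j))"
    using K by (intro sum.cong refl) (simp add: prod.delta)
  also have "\<dots> = (\<Prod>j\<in>K. \<Sum>\<delta>\<in>V. ?h j \<delta>)"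
    by (rule prod_sum_PiE[symmetric]) (use K V in auto)
  also have "\<dots> = (\<Sum>\<delta>\<in>V. G \<delta>) * (\<Prod>j\<in>K - {k}. real (card V))"
    using K by (subst prod.remove[of _ k]) (auto intro!: prod.cong)
  finally show ?thesis using K by (simp add: card_Diff_singleton)
qed

text \<open>Multiplying one row of a sign array by another row is a bijection of sign arrays.\<close>

lemma sum_PiE_sign_vectors_twist:
  assumes "j \<in> K" and "k \<in> K" and "j \<noteq> k"
  shows "(\<Sum>\<epsilon>\<in>K \<rightarrow>\<^sub>E sign_vectors I. G (\<lambda>i. \<epsilon> k i * \<epsilon> j i))
       = (\<Sum>\<epsilon>\<in>K \<rightarrow>\<^sub>E sign_vectors I. G (\<epsilon> k))"
proof -
  let ?t = "\<lambda>\<epsilon>. \<epsilon>(k := \<lambda>i. \<epsilon> k i * \<epsilon> j i)"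
  have rows: "\<epsilon> j \<in> sign_vectors I" "\<epsilon> k \<in> sign_vectors I" if "\<epsilon> \<in> K \<rightarrow>\<^sub>E sign_vectors I" for \<epsilon>
    using PiE_mem[OF that assms(1)] PiE_mem[OF that assms(2)] by simp_all
  have closed: "?t \<epsilon> \<in> K \<rightarrow>\<^sub>E sign_vectors I" if "\<epsilon> \<in> K \<rightarrow>\<^sub>E sign_vectors I" for \<epsilon>
  proof -
    have "?t \<epsilon> \<in> insert k K \<rightarrow>\<^sub>E sign_vectors I"
      using sign_vectors_mult[OF rows(2,1)[OF that]] that by (rule PiE_fun_upd)
    then show ?thesis by (simp only: insert_absorb[OF assms(2)])
  qed
  have involution: "?t (?t \<epsilon>) = \<epsilon>" if "\<epsilon> \<in> K \<rightarrow>\<^sub>E sign_vectors I" for \<epsilon>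
  proof -
    have row_k: "(\<lambda>i. \<epsilon> k i * \<epsilon> j i * \<epsilon> j i) = \<epsilon> k"
    proof
      fix i
      show "\<epsilon> k i * \<epsilon> j i * \<epsilon> j i = \<epsilon> k i"
      proof (cases "i \<in> I")
        case True
        then show ?thesis
          using sign_vectors_mult_self[OF rows(1)[OF that] True] by (simp add: mult.assoc)
      next
        case False
        then show ?thesis using rows(2)[OF that] by (simp add: sign_vectors_iff)
      qed
    qed
    have "?t (?t \<epsilon>) = \<epsilon>(k := \<lambda>i. \<epsilon> k i * \<epsilon> j i * \<epsilon> j i)"
      using assms(3) by simp
    then show ?thesis by (simp only: row_k fun_upd_triv)
  qed
  show ?thesis
  proof (rule sum.reindex_bij_witness[of _ ?t ?t])
    fix \<epsilon> assume \<epsilon>: "\<epsilon> \<in> K \<rightarrow>\<^sub>E sign_vectors I"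
    show "?t (?t \<epsilon>) = \<epsilon>" "?t (?t \<epsilon>) = \<epsilon>" by (fact involution[OF \<epsilon>])+
    show "?t \<epsilon> \<in> K \<rightarrow>\<^sub>E sign_vectors I" "?t \<epsilon> \<in> K \<rightarrow>\<^sub>E sign_vectors I" by (fact closed[OF \<epsilon>])+
    show "G ((?t \<epsilon>) k) = G (\<lambda>i. \<epsilon> k i * \<epsilon> j i)" by simp
  qed
qed

lemma permutes_comp_eq_iff:
  assumes "\<sigma> permutes K"
  shows "g \<circ> \<sigma> = g \<longleftrightarrow> (\<forall>j\<in>K. g j = g (inv \<sigma> j))"
proof
  assume "g \<circ> \<sigma> = g"
  then show "\<forall>j\<in>K. g j = g (inv \<sigma> j)"
    using permutes_inverses(1)[OF assms] by (metis comp_apply)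
next
  assume inv: "\<forall>j\<in>K. g j = g (inv \<sigma> j)"
  show "g \<circ> \<sigma> = g"
  proof
    fix k
    show "(g \<circ> \<sigma>) k = g k"
    proof (cases "k \<in> K")
      case True
      then have "\<sigma> k \<in> K" using permutes_in_image[OF assms] by blast
      then show ?thesis using inv permutes_inverses(2)[OF assms] by (metis comp_apply)
    next
      case False
      then show ?thesis using permutes_not_in[OF assms] by simp
    qed
  qed
qed

text \<open>The sum factorises over the rows; row j contributes the correlation of the entries
  g j and g (inv \<sigma> j), which vanishes unless they coincide.\<close>

lemma sum_PiE_sign_vectors_prod:
  fixes g :: "'k \<Rightarrow> 'i"
  assumes K: "finite K" and I: "finite I" and \<sigma>: "\<sigma> permutes K" and g: "g \<in> K \<rightarrow>\<^sub>E I"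
  shows "(\<Sum>\<epsilon>\<in>K \<rightarrow>\<^sub>E sign_vectors I. \<Prod>k\<in>K. \<epsilon> k (g k) * \<epsilon> (\<sigma> k) (g k))
       = (if g \<circ> \<sigma> = g then real (card (K \<rightarrow>\<^sub>E sign_vectors I)) else 0)"
proof -
  have reindex: "(\<Prod>k\<in>K. \<epsilon> k (g k) * \<epsilon> (\<sigma> k) (g k)) = (\<Prod>j\<in>K. \<epsilon> j (g j) * \<epsilon> j (g (inv \<sigma> j)))"
    for \<epsilon> :: "'k \<Rightarrow> 'i \<Rightarrow> real"
  proof -
    have "(\<Prod>j\<in>K. \<epsilon> j (g (inv \<sigma> j))) = (\<Prod>k\<in>K. \<epsilon> (\<sigma> k) (g (inv \<sigma> (\<sigma> k))))"
      using prod.permute[OF \<sigma>, of "\<lambda>j. \<epsilon> j (g (inv \<sigma> j))"] by (simp add: o_def)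
    also have "\<dots> = (\<Prod>k\<in>K. \<epsilon> (\<sigma> k) (g k))"
      using permutes_inverses(2)[OF \<sigma>] by simp
    finally show ?thesis by (simp add: prod.distrib)
  qed
  have "(\<Sum>\<epsilon>\<in>K \<rightarrow>\<^sub>E sign_vectors I. \<Prod>k\<in>K. \<epsilon> k (g k) * \<epsilon> (\<sigma> k) (g k))
      = (\<Prod>j\<in>K. \<Sum>\<delta>\<in>sign_vectors I. \<delta> (g j) * \<delta> (g (inv \<sigma> j)))"
    unfolding reindex by (rule prod_sum_PiE[symmetric]) (use K I finite_sign_vectors in auto)
  also have "\<dots> = (\<Prod>j\<in>K. if g j = g (inv \<sigma> j) then real (card (sign_vectors I)) else 0)"
  proof (intro prod.cong refl)
    fix j assume "j \<in> K"
    moreover have "inv \<sigma> j \<in> K" using \<open>j \<in> K\<close> permutes_in_image[OF permutes_inv[OF \<sigma>]] by blast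
    ultimately show "(\<Sum>\<delta>\<in>sign_vectors I. \<delta> (g j) * \<delta> (g (inv \<sigma> j)))
        = (if g j = g (inv \<sigma> j) then real (card (sign_vectors I)) else 0)"
      using g by (intro sum_sign_vectors_mult) auto
  qed
  also have "\<dots> = (if g \<circ> \<sigma> = g then real (card (K \<rightarrow>\<^sub>E sign_vectors I)) else 0)"
    using K by (auto simp: permutes_comp_eq_iff[OF \<sigma>] card_PiE prod_zero)
  finally show ?thesis .
qed

section \<open>Hoelder's inequality for averages\<close>

lemma power_powr_inverse: "0 \<le> x \<Longrightarrow> 0 < n \<Longrightarrow> (x ^ n) powr (1 / real n) = x"
  by (simp add: root_powr_inverse[symmetric] real_root_power_cancel)

lemma prod_le_average_power:
  fixes x :: "'k \<Rightarrow> real"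
  assumes "finite K" and "K \<noteq> {}" and "\<And>k. k \<in> K \<Longrightarrow> 0 \<le> x k"
  shows "(\<Prod>k\<in>K. x k) \<le> (\<Sum>k\<in>K. x k ^ card K) / card K"
proof -
  have "(\<Prod>k\<in>K. x k) = ((\<Prod>k\<in>K. x k) ^ card K) powr (1 / real (card K))"
    using assms by (simp add: power_powr_inverse prod_nonneg card_gt_0_iff)
  also have "\<dots> = (\<Prod>k\<in>K. x k ^ card K) powr (1 / real (card K))"
    by (simp add: prod_power_distrib)
  also have "\<dots> \<le> (\<Sum>k\<in>K. x k ^ card K / card K)"
    using assms by (intro arith_geom_mean) auto
  finally show ?thesis by (simp add: sum_divide_distrib)
qed


lemma holder_average:
  fixes Y :: "'k \<Rightarrow> 'b \<Rightarrow> real"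
  assumes \<Omega>: "finite \<Omega>" "\<Omega> \<noteq> {}" and K: "finite K" "K \<noteq> {}"
    and Y: "\<And>k \<omega>. k \<in> K \<Longrightarrow> \<omega> \<in> \<Omega> \<Longrightarrow> Y k \<omega> \<ge> 0"
  shows "(\<Sum>\<omega>\<in>\<Omega>. \<Prod>k\<in>K. Y k \<omega>) / card \<Omega>
       \<le> (\<Prod>k\<in>K. ((\<Sum>\<omega>\<in>\<Omega>. Y k \<omega> ^ card K) / card \<Omega>) powr (1 / card K))"
proof -
  define n where "n = card K"
  define N where "N k = ((\<Sum>\<omega>\<in>\<Omega>. Y k \<omega> ^ n) / card \<Omega>) powr (1 / n)" for k
  have n: "n > 0" using K by (simp add: n_def card_gt_0_iff)
  have \<Omega>_pos: "real (card \<Omega>) > 0" using \<Omega> by (simp add: card_gt_0_iff)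
  show ?thesis
  proof (cases "\<exists>k\<in>K. N k = 0")
    case True
    then obtain k where k: "k \<in> K" "N k = 0" by blast
    then have "(\<Sum>\<omega>\<in>\<Omega>. Y k \<omega> ^ n) = 0" using \<Omega>_pos by (simp add: N_def)
    then have "Y k \<omega> = 0" if "\<omega> \<in> \<Omega>" for \<omega>
      using sum_nonneg_eq_0_iff[OF \<Omega>(1), of "\<lambda>\<omega>. Y k \<omega> ^ n"] Y k that by auto
    then have "(\<Sum>\<omega>\<in>\<Omega>. \<Prod>k\<in>K. Y k \<omega>) = 0"
      using k K by (intro sum.neutral ballI prod_zero bexI[of _ k]) auto
    then show ?thesis by (simp add: prod_nonneg)
  next
    case False
    then have N_pos: "N k > 0" if "k \<in> K" for k using that by (simp add: N_def)
    have N_pow: "N k ^ n = (\<Sum>\<omega>\<in>\<Omega>. Y k \<omega> ^ n) / card \<Omega>" if "k \<in> K" for k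
      using N_pos[OF that] n Y[OF that] sum_nonneg[of \<Omega> "\<lambda>\<omega>. Y k \<omega> ^ n"]
      by (simp add: N_def powr_realpow[symmetric] powr_powr del: powr_realpow)
    have "(\<Sum>\<omega>\<in>\<Omega>. \<Prod>k\<in>K. Y k \<omega> / N k) \<le> (\<Sum>\<omega>\<in>\<Omega>. (\<Sum>k\<in>K. (Y k \<omega> / N k) ^ n) / n)"
      unfolding n_def using K Y N_pos
      by (intro sum_mono prod_le_average_power) (auto intro!: divide_nonneg_pos)
    also have "\<dots> = (\<Sum>k\<in>K. (\<Sum>\<omega>\<in>\<Omega>. Y k \<omega> ^ n) / N k ^ n) / n"
      unfolding power_divide sum_divide_distrib by (rule sum.swap)
    also have "\<dots> = (\<Sum>k\<in>K. real (card \<Omega>)) / n"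
    proof (intro arg_cong[where f = "\<lambda>x. x / n"] sum.cong refl)
      fix k assume k: "k \<in> K"
      have "(\<Sum>\<omega>\<in>\<Omega>. Y k \<omega> ^ n) / card \<Omega> > 0"
        using N_pos[OF k] N_pow[OF k] by (metis zero_less_power)
      then have "(\<Sum>\<omega>\<in>\<Omega>. Y k \<omega> ^ n) \<noteq> 0" by auto
      then show "(\<Sum>\<omega>\<in>\<Omega>. Y k \<omega> ^ n) / N k ^ n = card \<Omega>"
        using \<Omega>_pos by (simp add: N_pow[OF k])
    qed
    also have "\<dots> = card \<Omega>"
      using n by (simp add: n_def)
    finally have "(\<Sum>\<omega>\<in>\<Omega>. \<Prod>k\<in>K. Y k \<omega>) / (\<Prod>k\<in>K. N k) \<le> card \<Omega>"
      by (simp add: prod_dividef sum_divide_distrib)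
    then show ?thesis
      using N_pos \<Omega>_pos by (simp add: N_def n_def divide_le_eq prod_pos mult.commute)
  qed
qed

section \<open>Decoupled sums\<close>

definition twisted_sum ::
    "'i set \<Rightarrow> ('i \<Rightarrow> 'k \<Rightarrow> 'a::real_vector) \<Rightarrow> ('k \<Rightarrow> 'k) \<Rightarrow> ('k \<Rightarrow> 'i \<Rightarrow> real) \<Rightarrow> 'k \<Rightarrow> 'a" where
  "twisted_sum I d \<sigma> \<epsilon> k = (\<Sum>i\<in>I. (\<epsilon> k i * \<epsilon> (\<sigma> k) i) *\<^sub>R d i k)"

lemma twisted_sum_in_subspace:
  assumes "subspace V" and "\<And>i. i \<in> I \<Longrightarrow> d i k \<in> V"
  shows "twisted_sum I d \<sigma> \<epsilon> k \<in> V"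
  unfolding twisted_sum_def using assms by (intro subspace_sum subspace_scale) auto

lemma twisted_sum_fixpoint:
  assumes "\<sigma> k = k" and "\<epsilon> k \<in> sign_vectors I"
  shows "twisted_sum I d \<sigma> \<epsilon> k = (\<Sum>i\<in>I. d i k)"
  unfolding twisted_sum_def using assms by (intro sum.cong) (auto simp: sign_vectors_mult_self)

text \<open>On a point moved by the permutation the twisted sum is itself a Rademacher sum.\<close>

lemma average_twisted_sum_moved:
  assumes K: "finite K" "k \<in> K" "\<sigma> k \<in> K" "\<sigma> k \<noteq> k" and I: "finite I"
  shows "(\<Sum>\<epsilon>\<in>K \<rightarrow>\<^sub>E sign_vectors I. h (twisted_sum I d \<sigma> \<epsilon> k)) / card (K \<rightarrow>\<^sub>E sign_vectors I)
       = measure_pmf.expectation (rademacher I) (\<lambda>\<delta>. h (\<Sum>i\<in>I. \<delta> i *\<^sub>R d i k))"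
proof -
  let ?H = "\<lambda>\<delta>. h (\<Sum>i\<in>I. \<delta> i *\<^sub>R d i k)"
  have "(\<Sum>\<epsilon>\<in>K \<rightarrow>\<^sub>E sign_vectors I. h (twisted_sum I d \<sigma> \<epsilon> k))
      = (\<Sum>\<epsilon>\<in>K \<rightarrow>\<^sub>E sign_vectors I. ?H (\<lambda>i. \<epsilon> k i * \<epsilon> (\<sigma> k) i))"
    by (simp add: twisted_sum_def)
  also have "\<dots> = (\<Sum>\<epsilon>\<in>K \<rightarrow>\<^sub>E sign_vectors I. ?H (\<epsilon> k))"
    using K by (intro sum_PiE_sign_vectors_twist) auto
  also have "\<dots> = real (card (sign_vectors I)) ^ (card K - 1) * (\<Sum>\<delta>\<in>sign_vectors I. ?H \<delta>)"
    using K I by (intro sum_PiE_coordinate finite_sign_vectors)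
  finally have "(\<Sum>\<epsilon>\<in>K \<rightarrow>\<^sub>E sign_vectors I. h (twisted_sum I d \<sigma> \<epsilon> k))
      = real (card (sign_vectors I)) ^ (card K - 1) * (\<Sum>\<delta>\<in>sign_vectors I. ?H \<delta>)" .
  moreover obtain m where "card K = Suc m"
    using K by (metis card_gt_0_iff gr0_implies_Suc empty_iff)
  then have "card (K \<rightarrow>\<^sub>E sign_vectors I) = card (sign_vectors I) * card (sign_vectors I) ^ (card K - 1)"
    using K by (simp add: card_PiE)
  moreover have "card (sign_vectors I) > 0" using I by (simp add: card_sign_vectors)
  ultimately show ?thesis by (simp add: expectation_rademacher I)
qed

lemma sum_multilinear_twisted_sum:
  assumes ml: "multilinear_on p E \<phi>" and sub: "\<And>k. k \<in> {1..p} \<Longrightarrow> subspace (E k)"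
    and I: "finite I" and d: "\<And>i k. i \<in> I \<Longrightarrow> k \<in> {1..p} \<Longrightarrow> d i k \<in> E k"
    and \<sigma>: "\<sigma> permutes {1..p}"
  shows "(\<Sum>\<epsilon>\<in>{1..p} \<rightarrow>\<^sub>E sign_vectors I. \<phi> (twisted_sum I d \<sigma> \<epsilon>))
       = real (card ({1..p} \<rightarrow>\<^sub>E sign_vectors I))
         * (\<Sum>g\<in>{1..p} \<rightarrow>\<^sub>E I. if g \<circ> \<sigma> = g then \<phi> (\<lambda>k. d (g k) k) else 0)"
proof -
  let ?\<Omega> = "{1..p} \<rightarrow>\<^sub>E sign_vectors I"
  have "(\<Sum>\<epsilon>\<in>?\<Omega>. \<phi> (twisted_sum I d \<sigma> \<epsilon>))
      = (\<Sum>\<epsilon>\<in>?\<Omega>. \<Sum>g\<in>{1..p} \<rightarrow>\<^sub>E I.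
           (\<Prod>k\<in>{1..p}. \<epsilon> k (g k) * \<epsilon> (\<sigma> k) (g k)) * \<phi> (\<lambda>k. d (g k) k))"
    unfolding twisted_sum_def[abs_def]
    by (intro sum.cong refl multilinear_on_expand[OF ml sub I d])
  also have "\<dots> = (\<Sum>g\<in>{1..p} \<rightarrow>\<^sub>E I.
           (\<Sum>\<epsilon>\<in>?\<Omega>. \<Prod>k\<in>{1..p}. \<epsilon> k (g k) * \<epsilon> (\<sigma> k) (g k)) * \<phi> (\<lambda>k. d (g k) k))"
    by (subst sum.swap) (simp add: sum_distrib_right)
  also have "\<dots> = (\<Sum>g\<in>{1..p} \<rightarrow>\<^sub>E I.
           real (card ?\<Omega>) * (if g \<circ> \<sigma> = g then \<phi> (\<lambda>k. d (g k) k) else 0))"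
    using I \<sigma> by (intro sum.cong refl) (simp add: sum_PiE_sign_vectors_prod)
  finally show ?thesis by (simp add: sum_distrib_left)
qed

lemma sum_sign_twisted_eq_injective:
  assumes ml: "multilinear_on p E \<phi>" and sub: "\<And>k. k \<in> {1..p} \<Longrightarrow> subspace (E k)"
    and I: "finite I" and d: "\<And>i k. i \<in> I \<Longrightarrow> k \<in> {1..p} \<Longrightarrow> d i k \<in> E k"
  shows "(\<Sum>\<sigma>\<in>{\<sigma>. \<sigma> permutes {1..p}}. real_of_int (sign \<sigma>) *
            (\<Sum>\<epsilon>\<in>{1..p} \<rightarrow>\<^sub>E sign_vectors I. \<phi> (twisted_sum I d \<sigma> \<epsilon>)))
       = real (card ({1..p} \<rightarrow>\<^sub>E sign_vectors I))
         * (\<Sum>g\<in>{g \<in> {1..p} \<rightarrow>\<^sub>E I. inj_on g {1..p}}. \<phi> (\<lambda>k. d (g k) k))"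
proof -
  let ?N = "real (card ({1..p} \<rightarrow>\<^sub>E sign_vectors I))"
  let ?P = "{\<sigma>. \<sigma> permutes {1..p}}"
  let ?G = "{1..p} \<rightarrow>\<^sub>E I"
  let ?d = "\<lambda>g. \<phi> (\<lambda>k. d (g k) k)"
  have "(\<Sum>\<sigma>\<in>?P. real_of_int (sign \<sigma>) *
            (\<Sum>\<epsilon>\<in>{1..p} \<rightarrow>\<^sub>E sign_vectors I. \<phi> (twisted_sum I d \<sigma> \<epsilon>)))
      = (\<Sum>\<sigma>\<in>?P. \<Sum>g\<in>?G. ?N * ((if g \<circ> \<sigma> = g then real_of_int (sign \<sigma>) else 0) * ?d g))"
  proof (intro sum.cong refl)
    fix \<sigma> assume "\<sigma> \<in> ?P"
    then have "(\<Sum>\<epsilon>\<in>{1..p} \<rightarrow>\<^sub>E sign_vectors I. \<phi> (twisted_sum I d \<sigma> \<epsilon>))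
        = ?N * (\<Sum>g\<in>?G. if g \<circ> \<sigma> = g then ?d g else 0)"
      using ml sub I d by (intro sum_multilinear_twisted_sum[of p E \<phi> I d \<sigma>]) auto
    then show "real_of_int (sign \<sigma>) * (\<Sum>\<epsilon>\<in>{1..p} \<rightarrow>\<^sub>E sign_vectors I. \<phi> (twisted_sum I d \<sigma> \<epsilon>))
        = (\<Sum>g\<in>?G. ?N * ((if g \<circ> \<sigma> = g then real_of_int (sign \<sigma>) else 0) * ?d g))"
      by (auto simp: sum_distrib_left intro!: sum.cong)
  qed
  also have "\<dots> = (\<Sum>g\<in>?G. ?N * ((\<Sum>\<sigma>\<in>?P. if g \<circ> \<sigma> = g then real_of_int (sign \<sigma>) else 0) * ?d g))"
    by (subst sum.swap) (simp only: sum_distrib_left sum_distrib_right)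
  also have "\<dots> = (\<Sum>g\<in>?G. ?N * (if inj_on g {1..p} then ?d g else 0))"
    by (intro sum.cong refl) (simp add: sum_sign_stabilizer)
  also have "\<dots> = ?N * (\<Sum>g\<in>{g \<in> ?G. inj_on g {1..p}}. ?d g)"
    using I by (simp add: sum.inter_filter finite_PiE sum_distrib_left)
  finally show ?thesis .
qed

lemma tensor_minus_injective_eq_twisted:
  assumes ml: "multilinear_on p E \<phi>" and sub: "\<And>k. k \<in> {1..p} \<Longrightarrow> subspace (E k)"
    and I: "finite I" and d: "\<And>i k. i \<in> I \<Longrightarrow> k \<in> {1..p} \<Longrightarrow> d i k \<in> E k"
    and f: "\<And>k. k \<in> {1..p} \<Longrightarrow> f k = (\<Sum>i\<in>I. d i k)"
  shows "\<phi> f - (\<Sum>g\<in>{g \<in> {1..p} \<rightarrow>\<^sub>E I. inj_on g {1..p}}. \<phi> (\<lambda>k. d (g k) k))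
       = (\<Sum>(\<sigma>, \<epsilon>)\<in>({\<sigma>. \<sigma> permutes {1..p}} - {id}) \<times> ({1..p} \<rightarrow>\<^sub>E sign_vectors I).
            - real_of_int (sign \<sigma>) / card ({1..p} \<rightarrow>\<^sub>E sign_vectors I) * \<phi> (twisted_sum I d \<sigma> \<epsilon>))"
proof -
  let ?\<Omega> = "{1..p} \<rightarrow>\<^sub>E sign_vectors I"
  let ?P = "{\<sigma>. \<sigma> permutes {1..p}}"
  let ?inj = "\<Sum>g\<in>{g \<in> {1..p} \<rightarrow>\<^sub>E I. inj_on g {1..p}}. \<phi> (\<lambda>k. d (g k) k)"
  define Z where "Z \<sigma> = (\<Sum>\<epsilon>\<in>?\<Omega>. \<phi> (twisted_sum I d \<sigma> \<epsilon>))" for \<sigma>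
  have \<Omega>: "card ?\<Omega> > 0"
    using I by (simp add: card_PiE card_sign_vectors)
  have "Z id = (\<Sum>\<epsilon>\<in>?\<Omega>. \<phi> f)"
    unfolding Z_def
  proof (intro sum.cong refl multilinear_on_cong[OF ml])
    fix \<epsilon> k assume \<epsilon>: "\<epsilon> \<in> ?\<Omega>" and k: "k \<in> {1..p}"
    show "twisted_sum I d id \<epsilon> k = f k"
      using twisted_sum_fixpoint[of id k \<epsilon> I d] PiE_mem[OF \<epsilon> k] f[OF k] by simp
  qed
  then have Z_id: "Z id = real (card ?\<Omega>) * \<phi> f" by simp
  have signed: "(\<Sum>\<sigma>\<in>?P. real_of_int (sign \<sigma>) * Z \<sigma>) = real (card ?\<Omega>) * ?inj"
    unfolding Z_def by (rule sum_sign_twisted_eq_injective[OF ml sub I d])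
  have "(\<Sum>(\<sigma>, \<epsilon>)\<in>(?P - {id}) \<times> ?\<Omega>. - real_of_int (sign \<sigma>) / card ?\<Omega> * \<phi> (twisted_sum I d \<sigma> \<epsilon>))
      = (\<Sum>\<sigma>\<in>?P - {id}. - real_of_int (sign \<sigma>) / card ?\<Omega> * Z \<sigma>)"
    unfolding Z_def sum.cartesian_product[symmetric] by (simp only: sum_distrib_left)
  also have "\<dots> = - (\<Sum>\<sigma>\<in>?P - {id}. real_of_int (sign \<sigma>) * Z \<sigma>) / card ?\<Omega>"
    by (simp add: sum_divide_distrib flip: sum_negf)
  also have "(\<Sum>\<sigma>\<in>?P - {id}. real_of_int (sign \<sigma>) * Z \<sigma>)
      = (\<Sum>\<sigma>\<in>?P. real_of_int (sign \<sigma>) * Z \<sigma>) - Z id"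
    by (simp add: sum_diff1 finite_permutations permutes_id)
  also have "- ((\<Sum>\<sigma>\<in>?P. real_of_int (sign \<sigma>) * Z \<sigma>) - Z id) / card ?\<Omega> = \<phi> f - ?inj"
    unfolding signed Z_id using \<Omega> by (simp add: field_simps)
  finally show ?thesis by (rule sym)
qed

lemma average_prod_norm_twisted_sum_le:
  assumes p: "p > 0" and I: "finite I" and \<sigma>: "\<sigma> permutes {1..p}"
  defines "F \<equiv> {k \<in> {1..p}. \<sigma> k = k}"
  shows "(\<Sum>\<epsilon>\<in>{1..p} \<rightarrow>\<^sub>E sign_vectors I. \<Prod>k\<in>{1..p}. norm (twisted_sum I d \<sigma> \<epsilon> k))
           / card ({1..p} \<rightarrow>\<^sub>E sign_vectors I)
       \<le> (\<Prod>k\<in>F. norm (\<Sum>i\<in>I. d i k)) *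
         (\<Prod>k\<in>{1..p} - F. (measure_pmf.expectation (rademacher I)
             (\<lambda>\<delta>. norm (\<Sum>i\<in>I. \<delta> i *\<^sub>R d i k) ^ p)) powr (1 / real p))"
proof -
  let ?\<Omega> = "{1..p} \<rightarrow>\<^sub>E sign_vectors I"
  let ?M = "\<lambda>k. (\<Sum>\<epsilon>\<in>?\<Omega>. norm (twisted_sum I d \<sigma> \<epsilon> k) ^ p) / card ?\<Omega>"
  have "?\<Omega> \<noteq> {}" and "finite ?\<Omega>"
    using I finite_sign_vectors[OF I] by (auto simp: card_PiE card_sign_vectors PiE_eq_empty_iff
        intro!: finite_PiE) (metis card.empty card_sign_vectors power_not_zero zero_neq_numeral)
  then have "(\<Sum>\<epsilon>\<in>?\<Omega>. \<Prod>k\<in>{1..p}. norm (twisted_sum I d \<sigma> \<epsilon> k)) / card ?\<Omega>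
      \<le> (\<Prod>k\<in>{1..p}. ?M k powr (1 / p))"
    using holder_average[of ?\<Omega> "{1..p}" "\<lambda>k \<epsilon>. norm (twisted_sum I d \<sigma> \<epsilon> k)"] p by simp
  also have "\<dots> = (\<Prod>k\<in>{1..p}. if k \<in> F then norm (\<Sum>i\<in>I. d i k) else
      (measure_pmf.expectation (rademacher I) (\<lambda>\<delta>. norm (\<Sum>i\<in>I. \<delta> i *\<^sub>R d i k) ^ p)) powr (1 / real p))"
  proof (intro prod.cong refl)
    fix k assume k: "k \<in> {1..p}"
    show "?M k powr (1 / p) = (if k \<in> F then norm (\<Sum>i\<in>I. d i k) else
      (measure_pmf.expectation (rademacher I) (\<lambda>\<delta>. norm (\<Sum>i\<in>I. \<delta> i *\<^sub>R d i k) ^ p)) powr (1 / real p))"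
    proof (cases "k \<in> F")
      case True
      then have "twisted_sum I d \<sigma> \<epsilon> k = (\<Sum>i\<in>I. d i k)" if "\<epsilon> \<in> ?\<Omega>" for \<epsilon>
        using twisted_sum_fixpoint[of \<sigma> k \<epsilon> I d] PiE_mem[OF that k] True by (simp add: F_def)
      then have "?M k = norm (\<Sum>i\<in>I. d i k) ^ p"
        using \<open>?\<Omega> \<noteq> {}\<close> \<open>finite ?\<Omega>\<close> by (simp add: card_gt_0_iff)
      then show ?thesis using True p by (simp add: power_powr_inverse)
    next
      case False
      then have "\<sigma> k \<noteq> k" "\<sigma> k \<in> {1..p}" using k permutes_in_image[OF \<sigma>] by (auto simp: F_def)
      then have "?M k = measure_pmf.expectation (rademacher I)
          (\<lambda>\<delta>. norm (\<Sum>i\<in>I. \<delta> i *\<^sub>R d i k) ^ p)"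
        using k I by (intro average_twisted_sum_moved[where h = "\<lambda>x. norm x ^ p"]) auto
      then show ?thesis using False by simp
    qed
  qed
  also have "\<dots> = (\<Prod>k\<in>F. norm (\<Sum>i\<in>I. d i k)) *
         (\<Prod>k\<in>{1..p} - F. (measure_pmf.expectation (rademacher I)
             (\<lambda>\<delta>. norm (\<Sum>i\<in>I. \<delta> i *\<^sub>R d i k) ^ p)) powr (1 / real p))"
    by (subst prod.If_cases) (auto simp: F_def intro!: arg_cong2[where f = "(*)"] prod.cong)
  finally show ?thesis .
qed

lemma proj_norm_tensor_minus_injective_le:
  assumes p: "1 \<le> p" and sub: "\<And>k. k \<in> {1..p} \<Longrightarrow> subspace (E k)"
    and I: "finite I" and d: "\<And>i k. i \<in> I \<Longrightarrow> k \<in> {1..p} \<Longrightarrow> d i k \<in> E k"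
    and f: "\<And>k. k \<in> {1..p} \<Longrightarrow> f k = (\<Sum>i\<in>I. d i k)"
  shows "proj_norm p E
           (\<lambda>\<phi>. \<phi> f - (\<Sum>g\<in>{g \<in> {1..p} \<rightarrow>\<^sub>E I. inj_on g {1..p}}. \<phi> (\<lambda>k. d (g k) k)))
       \<le> (\<Sum>\<sigma>\<in>{\<sigma>. \<sigma> permutes {1..p}} - {id}.
            (\<Sum>\<epsilon>\<in>{1..p} \<rightarrow>\<^sub>E sign_vectors I. \<Prod>k\<in>{1..p}. norm (twisted_sum I d \<sigma> \<epsilon> k))
            / card ({1..p} \<rightarrow>\<^sub>E sign_vectors I))"
proof -
  let ?\<Omega> = "{1..p} \<rightarrow>\<^sub>E sign_vectors I"
  let ?Q = "{\<sigma>. \<sigma> permutes {1..p}} - {id}"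
  let ?y = "\<lambda>a. twisted_sum I d (fst a) (snd a)"
  have "proj_norm p E
           (\<lambda>\<phi>. \<phi> f - (\<Sum>g\<in>{g \<in> {1..p} \<rightarrow>\<^sub>E I. inj_on g {1..p}}. \<phi> (\<lambda>k. d (g k) k)))
      \<le> (\<Sum>a\<in>?Q \<times> ?\<Omega>. \<bar>- real_of_int (sign (fst a)) / card ?\<Omega>\<bar> * (\<Prod>k\<in>{1..p}. norm (?y a k)))"
  proof (rule proj_norm_le_lincomb)
    show "finite (?Q \<times> ?\<Omega>)"
      using I by (simp add: finite_permutations finite_PiE finite_sign_vectors)
    show "?y a k \<in> E k" if "k \<in> {1..p}" for a k
      using sub[OF that] d that by (intro twisted_sum_in_subspace)
    show "\<phi> f - (\<Sum>g\<in>{g \<in> {1..p} \<rightarrow>\<^sub>E I. inj_on g {1..p}}. \<phi> (\<lambda>k. d (g k) k))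
        = (\<Sum>a\<in>?Q \<times> ?\<Omega>. - real_of_int (sign (fst a)) / card ?\<Omega> * \<phi> (?y a))"
      if "multilinear_on p E \<phi>" for \<phi>
      using tensor_minus_injective_eq_twisted[OF that sub I d f] by (simp add: case_prod_unfold)
  qed (use p sub in auto)
  also have "\<dots> = (\<Sum>\<sigma>\<in>?Q. (\<Sum>\<epsilon>\<in>?\<Omega>. \<Prod>k\<in>{1..p}. norm (twisted_sum I d \<sigma> \<epsilon> k)) / card ?\<Omega>)"
    by (simp add: sum.cartesian_product case_prod_unfold sum_divide_distrib flip: of_int_abs)
  finally show ?thesis .
qed

theorem theorem5p1:
  fixes p :: nat and E :: "nat \<Rightarrow> 'a::banach set" and I :: "'i set"
    and d :: "'i \<Rightarrow> nat \<Rightarrow> 'a" and f :: "nat \<Rightarrow> 'a" and S :: "nat \<Rightarrow> real"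
  assumes "p \<ge> 2"
    and "\<And>k. k \<in> {1..p} \<Longrightarrow> subspace (E k) \<and> closed (E k)"
    and "finite I"
    and "\<And>i k. i \<in> I \<Longrightarrow> k \<in> {1..p} \<Longrightarrow> d i k \<in> E k"
    and "\<And>k. k \<in> {1..p} \<Longrightarrow> f k = (\<Sum>i\<in>I. d i k)"
    and "\<And>k. k \<in> {1..p} \<Longrightarrow> S k =
           (measure_pmf.expectation (rademacher I)
              (\<lambda>\<epsilon>. norm (\<Sum>i\<in>I. \<epsilon> i *\<^sub>R d i k) ^ p)) powr (1 / real p)"
  shows "proj_norm p E
           (\<lambda>\<phi>. \<phi> f - (\<Sum>g\<in>{g \<in> {1..p} \<rightarrow>\<^sub>E I. inj_on g {1..p}}. \<phi> (\<lambda>k. d (g k) k)))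
         \<le> (\<Sum>A\<in>{A. A \<subseteq> {1..p} \<and> card A \<le> p - 2}.
              (\<Prod>k\<in>A. norm (f k)) * (\<Prod>k\<in>{1..p} - A. S k) * fact (p - card A))"
proof -
  define B where "B A = (\<Prod>k\<in>A. norm (f k)) * (\<Prod>k\<in>{1..p} - A. S k)" for A
  have "proj_norm p E
           (\<lambda>\<phi>. \<phi> f - (\<Sum>g\<in>{g \<in> {1..p} \<rightarrow>\<^sub>E I. inj_on g {1..p}}. \<phi> (\<lambda>k. d (g k) k)))
      \<le> (\<Sum>\<sigma>\<in>{\<sigma>. \<sigma> permutes {1..p}} - {id}.
            (\<Sum>\<epsilon>\<in>{1..p} \<rightarrow>\<^sub>E sign_vectors I. \<Prod>k\<in>{1..p}. norm (twisted_sum I d \<sigma> \<epsilon> k))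
            / card ({1..p} \<rightarrow>\<^sub>E sign_vectors I))"
    using assms by (intro proj_norm_tensor_minus_injective_le) auto
  also have "\<dots> \<le> (\<Sum>\<sigma>\<in>{\<sigma>. \<sigma> permutes {1..p}} - {id}. B {k \<in> {1..p}. \<sigma> k = k})"
  proof (rule sum_mono)
    fix \<sigma> assume "\<sigma> \<in> {\<sigma>. \<sigma> permutes {1..p}} - {id}"
    then have "\<sigma> permutes {1..p}" by simp
    moreover have "B {k \<in> {1..p}. \<sigma> k = k} = (\<Prod>k\<in>{k \<in> {1..p}. \<sigma> k = k}. norm (\<Sum>i\<in>I. d i k)) *
         (\<Prod>k\<in>{1..p} - {k \<in> {1..p}. \<sigma> k = k}. (measure_pmf.expectation (rademacher I)
             (\<lambda>\<delta>. norm (\<Sum>i\<in>I. \<delta> i *\<^sub>R d i k) ^ p)) powr (1 / real p))"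
      unfolding B_def using assms(5,6) by (intro arg_cong2[where f = "(*)"] prod.cong) auto
    ultimately show "(\<Sum>\<epsilon>\<in>{1..p} \<rightarrow>\<^sub>E sign_vectors I. \<Prod>k\<in>{1..p}. norm (twisted_sum I d \<sigma> \<epsilon> k))
          / card ({1..p} \<rightarrow>\<^sub>E sign_vectors I) \<le> B {k \<in> {1..p}. \<sigma> k = k}"
      using average_prod_norm_twisted_sum_le[of p I \<sigma> d] assms(1,3) by simp
  qed
  also have "\<dots> \<le> (\<Sum>A\<in>{A. A \<subseteq> {1..p} \<and> card A \<le> p - 2}. B A * fact (p - card A))"
  proof -
    have "0 \<le> B A" if "A \<subseteq> {1..p}" for A
      using assms(6) unfolding B_def by (intro mult_nonneg_nonneg prod_nonneg) auto
    then show ?thesis using sum_nonid_permutes_fixpoints_le[of "{1..p}" B] by simp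
  qed
  finally show ?thesis unfolding B_def .
qed

end
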